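(* In the setting below, the Markov chain on $\mathcal{G}$ defined by iterating the Weighted Graph Sampler is ergodic with respect to the uniform distribution on $\mathcal{G}$; in particular it is reversible with respect to the uniform distribution and any $G'\in\mathcal{G}$ can be reached from any $G\in\mathcal{G}$ with positive probability.
   Context: Setting (weighted graphs). $V$ is a finite vertex set. An integer-weighted graph is $G=(V,E,c)$ with $c:V\times V\to\mathbb{N}_0$ and $E(G)=\{uv: c(uv)>0\}$; graphs are all directed or all undirected (if undirected $uv=vu$). The out-/in-strength of a vertex is the sum of weights of edges from/to it (strength if undirected). $G_0$ is a given weighted graph and $\mathcal{F}$ a given set of possible edges. $\mathcal{G}$ is the set of weighted graphs $G$ on $V$ with the same strength sequence as $G_0$ (in- and out-strengths if directed) and $c_G(uv)=c_{G_0}(uv)$ for all $uv\in\mathcal{F}$. Define $N_G(u)=\{v: vu\in E(G), vu\notin\mathcal{F}\}$ and $M_G(u)=\{v: uv\notin\mathcal{F}\}$. Kernel selection from $G$: $W_{-1}=*$; sample $W_0$ uniformly from $\{v: N_G(v)\ne\emptyset\}$; $n=0$; repeat: (1) if $N_G(W_n)\setminus\{W_{n-1}\}=\emptyset$ stop and return "identity"; else sample $W_{n+1}$ uniformly from it; (2) if $W_0\in M_G(W_{n+1})\setminus\{W_n\}$, set $W_{n+2}=W_0$ and stop, returning $w=W_0W_1\cdots W_{n+1}W_0$; else if $M_G(W_{n+1})\setminus\{W_n\}=\emptyset$ stop and return "identity"; else sample $W_{n+2}$ uniformly from it and set $n\leftarrow n+2$. (The graph is not modified during this selection.) For a sequence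 $w=w_0w_1\cdots w_kw_0$ ($k$ odd), let $n_w(uv)$ be the number of occurrences of $uv$ among $w_1w_0,w_3w_2,\dots,w_kw_{k-1}$ minus the number among $w_1w_2,w_3w_4,\dots,w_kw_0$. For a graph $G'$, let $\mathbb{V}_{G'}(z)$ denote the probability that kernel selection from $G'$ returns $w$ or its reverse $w^r$ ($z=\{w,w^r\}$). Weighted Graph Sampler (one iteration from $G\in\mathcal{G}$): run kernel selection; if it returns "identity", stay at $G$. Otherwise, with $w$ returned, let $[\Delta_{low},\Delta_{up}]$ be the set of integers $\Delta$ for which the graph $G_\Delta$ with weights $c_G(uv)+n_w(uv)\Delta$ for all $uv$ lies in $\mathcal{G}$ (i.e. all weights nonnegative); sample $\Delta$ from this set with probability proportional to $\mathbb{V}_{G_\Delta}(z)$, and move to $G_\Delta$. *)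

theory Defs
  imports "HOL-Analysis.Analysis" "HOL-Library.Extended_Nonnegative_Real"
begin

text \<open>The flag d is True for directed graphs, False for undirected graphs; in the undirected case
  a graph is a symmetric weight function (uv = vu).\<close>

type_synonym 'v wgraph = "'v \<Rightarrow> 'v \<Rightarrow> nat"

definition is_graph :: "bool \<Rightarrow> 'v wgraph \<Rightarrow> bool" where
  "is_graph d c \<longleftrightarrow> d \<or> (\<forall>u v. c u v = c v u)"

definition out_strength :: "'v::finite wgraph \<Rightarrow> 'v \<Rightarrow> nat" where
  "out_strength c u = (\<Sum>v\<in>UNIV. c u v)"

definition in_strength :: "'v::finite wgraph \<Rightarrow> 'v \<Rightarrow> nat" where
  "in_strength c u = (\<Sum>v\<in>UNIV. c v u)"

text \<open>Undirected strength: a loop uu contributes twice (each end of the edge).\<close>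
definition ustrength :: "'v::finite wgraph \<Rightarrow> 'v \<Rightarrow> nat" where
  "ustrength c u = (\<Sum>v\<in>UNIV. c u v) + c u u"

definition same_strengths :: "bool \<Rightarrow> 'v::finite wgraph \<Rightarrow> 'v wgraph \<Rightarrow> bool" where
  "same_strengths d c c' \<longleftrightarrow>
     (if d then (\<forall>u. out_strength c u = out_strength c' u \<and> in_strength c u = in_strength c' u)
      else (\<forall>u. ustrength c u = ustrength c' u))"

definition in_F :: "bool \<Rightarrow> ('v \<times> 'v) set \<Rightarrow> 'v \<Rightarrow> 'v \<Rightarrow> bool" where
  "in_F d F u v \<longleftrightarrow> (u, v) \<in> F \<or> (\<not> d \<and> (v, u) \<in> F)"

definition graph_space :: "bool \<Rightarrow> ('v \<times> 'v) set \<Rightarrow> 'v::finite wgraph \<Rightarrow> 'v wgraph set" where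
  "graph_space d F G0 = {c. is_graph d c \<and> same_strengths d G0 c \<and>
                            (\<forall>u v. in_F d F u v \<longrightarrow> c u v = G0 u v)}"

definition Nbr :: "bool \<Rightarrow> ('v \<times> 'v) set \<Rightarrow> 'v wgraph \<Rightarrow> 'v \<Rightarrow> 'v set" where
  "Nbr d F c u = {v. 0 < c v u \<and> \<not> in_F d F v u}"

definition Mset :: "bool \<Rightarrow> ('v \<times> 'v) set \<Rightarrow> 'v \<Rightarrow> 'v set" where
  "Mset d F u = {v. \<not> in_F d F u v}"

definition start_set :: "bool \<Rightarrow> ('v \<times> 'v) set \<Rightarrow> 'v wgraph \<Rightarrow> 'v set" where
  "start_set d F c = {v. Nbr d F c v \<noteq> {}}"

definition unif_pick :: "'v set \<Rightarrow> 'v \<Rightarrow> real" where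
  "unif_pick A x = (if x \<in> A then 1 / real (card A) else 0)"

text \<open>Probability of the j-th sampling step (1 \<le> j \<le> k) of kernel selection producing w!j,
  given that the previous steps produced w!0, ..., w!(j-1).
  Odd j: step (1) from W_(j-1), excluding W_(j-2) (nothing excluded for j = 1).
  Even j: step (2) at W_(j-1) did not close (W_0 not in M(W_(j-1)) - {W_(j-2)}), and sampled w!j.\<close>
definition step_factor :: "bool \<Rightarrow> ('v \<times> 'v) set \<Rightarrow> 'v wgraph \<Rightarrow> 'v list \<Rightarrow> nat \<Rightarrow> real" where
  "step_factor d F c w j =
     (if odd j then unif_pick (Nbr d F c (w ! (j - 1)) - (if j = 1 then {} else {w ! (j - 2)})) (w ! j)
      else (if w ! 0 \<in> Mset d F (w ! (j - 1)) - {w ! (j - 2)} then 0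
            else unif_pick (Mset d F (w ! (j - 1)) - {w ! (j - 2)}) (w ! j)))"

text \<open>Probability that kernel selection from the graph c returns the sequence
  w_0 w_1 ... w_k w_0 (k odd), represented by the list [w_0, ..., w_k].\<close>
definition sel_prob :: "bool \<Rightarrow> ('v \<times> 'v) set \<Rightarrow> 'v::finite wgraph \<Rightarrow> 'v list \<Rightarrow> real" where
  "sel_prob d F c w =
     (let k = length w - 1 in
      if even (length w) \<and> 2 \<le> length w then
        unif_pick (start_set d F c) (w ! 0) *
        (\<Prod>j\<in>{1..k}. step_factor d F c w j) *
        (if w ! 0 \<in> Mset d F (w ! k) - {w ! (k - 1)} then 1 else 0)
      else 0)"

text \<open>Reverse of w_0 w_1 ... w_k w_0, i.e. w_0 w_k ... w_1 w_0.\<close>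
definition wrev :: "'v list \<Rightarrow> 'v list" where
  "wrev w = hd w # rev (tl w)"

definition Vprob :: "bool \<Rightarrow> ('v \<times> 'v) set \<Rightarrow> 'v::finite wgraph \<Rightarrow> 'v list \<Rightarrow> real" where
  "Vprob d F c w = (\<Sum>x\<in>{w, wrev w}. sel_prob d F c x)"

definition plus_pairs :: "'v list \<Rightarrow> ('v \<times> 'v) list" where
  "plus_pairs w = map (\<lambda>i. (w ! (2 * i + 1), w ! (2 * i))) [0..<length w div 2]"

definition minus_pairs :: "'v list \<Rightarrow> ('v \<times> 'v) list" where
  "minus_pairs w = map (\<lambda>i. (w ! (2 * i + 1), w ! ((2 * i + 2) mod length w))) [0..<length w div 2]"

definition is_edge :: "bool \<Rightarrow> 'v \<Rightarrow> 'v \<Rightarrow> 'v \<times> 'v \<Rightarrow> bool" where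
  "is_edge d u v p \<longleftrightarrow> p = (u, v) \<or> (\<not> d \<and> p = (v, u))"

definition n_w :: "bool \<Rightarrow> 'v list \<Rightarrow> 'v \<Rightarrow> 'v \<Rightarrow> int" where
  "n_w d w u v = int (length (filter (is_edge d u v) (plus_pairs w)))
               - int (length (filter (is_edge d u v) (minus_pairs w)))"

text \<open>G_\<Delta>, with weights c(uv) + n_w(uv) \<Delta> (only meaningful when these are nonnegative).\<close>
definition shift :: "bool \<Rightarrow> 'v list \<Rightarrow> 'v wgraph \<Rightarrow> int \<Rightarrow> 'v wgraph" where
  "shift d w c \<Delta> = (\<lambda>u v. nat (int (c u v) + n_w d w u v * \<Delta>))"

definition Dset :: "bool \<Rightarrow> ('v \<times> 'v) set \<Rightarrow> 'v::finite wgraph \<Rightarrow> 'v wgraph \<Rightarrow> 'v list \<Rightarrow> int set" where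
  "Dset d F G0 c w = {\<Delta>. (\<forall>u v. 0 \<le> int (c u v) + n_w d w u v * \<Delta>) \<and>
                            shift d w c \<Delta> \<in> graph_space d F G0}"

definition move_prob :: "bool \<Rightarrow> ('v \<times> 'v) set \<Rightarrow> 'v::finite wgraph \<Rightarrow> 'v wgraph \<Rightarrow> 'v wgraph \<Rightarrow> ennreal" where
  "move_prob d F G0 c c' =
     (\<Sum>\<^sub>\<infinity>w. ennreal (sel_prob d F c w) *
        (\<Sum>\<^sub>\<infinity>\<Delta>\<in>{\<Delta> \<in> Dset d F G0 c w. shift d w c \<Delta> = c'}. ennreal (Vprob d F (shift d w c \<Delta>) w)) /
        (\<Sum>\<^sub>\<infinity>\<Delta>\<in>Dset d F G0 c w. ennreal (Vprob d F (shift d w c \<Delta>) w)))"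

definition id_prob :: "bool \<Rightarrow> ('v \<times> 'v) set \<Rightarrow> 'v::finite wgraph \<Rightarrow> ennreal" where
  "id_prob d F c = 1 - (\<Sum>\<^sub>\<infinity>w. ennreal (sel_prob d F c w))"

definition wgs_trans :: "bool \<Rightarrow> ('v \<times> 'v) set \<Rightarrow> 'v::finite wgraph \<Rightarrow> 'v wgraph \<Rightarrow> 'v wgraph \<Rightarrow> ennreal" where
  "wgs_trans d F G0 c c' = move_prob d F G0 c c' + (if c' = c then id_prob d F c else 0)"

end

theory Submission
  imports Defs
begin

text \<open>Reversibility: a move from \<open>G\<close> to \<open>G'\<close> via the cycle \<open>w\<close> stays on the line of graphs
  \<open>G\<^sub>\<Delta>\<close>, and the reverse move can use \<open>w\<close> or \<open>w\<^sup>r\<close>. The factor that counts and normalises the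
  admissible \<open>\<Delta>\<close> is the same for \<open>G\<close> and \<open>G'\<close> and for \<open>w\<close> and \<open>w\<^sup>r\<close>, so the two transition
  probabilities agree after reindexing the sum over \<open>w\<close> by reversal.

  Irreducibility: from \<open>G \<noteq> G'\<close> we reach a graph strictly closer to \<open>G'\<close> in \<open>\<ell>\<^sub>1\<close>-distance.
  Kernel selection from \<open>G\<close> can follow an alternating walk that steps backwards along edges where
  \<open>G\<close> exceeds \<open>G'\<close> and forwards along free pairs where \<open>G'\<close> exceeds \<open>G\<close>. Since \<open>G\<close> and \<open>G'\<close>
  have the same strengths, the walk can be continued until it closes. With \<open>\<Delta> = -1\<close> every pair
  except the closing one moves a unit towards \<open>G'\<close>, and the reversed walk can be selected from the
  new graph, so the move has positive probability.\<close>

section \<open>Reversal of sequences\<close>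

lemma unif_pick_nonneg: "0 \<le> unif_pick A x"
  by (simp add: unif_pick_def)

lemma unif_pick_pos_iff: "0 < unif_pick (A :: 'v::finite set) x \<longleftrightarrow> x \<in> A"
  by (auto simp: unif_pick_def card_gt_0_iff)

lemma step_factor_nonneg: "0 \<le> step_factor d F c w j"
  by (simp add: step_factor_def unif_pick_nonneg)

lemma sel_prob_nonneg: "0 \<le> sel_prob d F c w"
  by (auto simp: sel_prob_def Let_def unif_pick_nonneg step_factor_nonneg
           intro!: mult_nonneg_nonneg prod_nonneg)

lemma sel_prob_nonzero_imp_length:
  "sel_prob d F c w \<noteq> 0 \<Longrightarrow> even (length w) \<and> 2 \<le> length w"
  by (auto simp: sel_prob_def Let_def split: if_splits)

lemma Vprob_split:
  "Vprob d F c w = sel_prob d F c w + (if wrev w \<noteq> w then sel_prob d F c (wrev w) else 0)"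
  by (auto simp: Vprob_def)

lemma wrev_length: "w \<noteq> [] \<Longrightarrow> length (wrev w) = length w"
  by (cases w) (auto simp: wrev_def)

lemma wrev_wrev: "w \<noteq> [] \<Longrightarrow> wrev (wrev w) = w"
  by (cases w) (auto simp: wrev_def)

lemma wrev_nth0: "w \<noteq> [] \<Longrightarrow> wrev w ! 0 = w ! 0"
  by (cases w) (auto simp: wrev_def)

lemma wrev_nth:
  assumes "j < length w"
  shows "wrev w ! j = w ! ((length w - j) mod length w)"
proof (cases w)
  case (Cons a xs)
  show ?thesis
  proof (cases j)
    case (Suc i)
    then have "wrev w ! j = rev xs ! i" using Cons by (simp add: wrev_def)
    also have "\<dots> = w ! ((length w - j) mod length w)"
      using Cons Suc assms by (simp add: rev_nth Suc_diff_Suc)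
    finally show ?thesis .
  qed (simp add: Cons wrev_nth0)
qed (use assms in simp)

lemma Vprob_wrev: "w \<noteq> [] \<Longrightarrow> Vprob d F c (wrev w) = Vprob d F c w"
  by (simp add: Vprob_def wrev_wrev insert_commute)

lemma plus_pairs_wrev:
  assumes "even (length w)" "2 \<le> length w"
  shows "plus_pairs (wrev w) = rev (minus_pairs w)"
proof (rule nth_equalityI)
  have ne: "w \<noteq> []" using assms by auto
  show "length (plus_pairs (wrev w)) = length (rev (minus_pairs w))"
    by (simp add: plus_pairs_def minus_pairs_def wrev_length[OF ne])
  fix i assume "i < length (plus_pairs (wrev w))"
  then have i: "i < length w div 2" by (simp add: plus_pairs_def wrev_length[OF ne])
  define k where "k = length w div 2 - Suc i"
  have "length w = 2 * (length w div 2)" using assms by simp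
  then have k: "2 * k + 1 = length w - (2 * i + 1)" "2 * k + 2 = length w - 2 * i"
    using i unfolding k_def by linarith+
  have "k < length w div 2" using i by (simp add: k_def)
  show "plus_pairs (wrev w) ! i = rev (minus_pairs w) ! i"
    using i k \<open>k < length w div 2\<close>
    by (simp add: plus_pairs_def minus_pairs_def rev_nth wrev_length[OF ne] wrev_nth k_def[symmetric])
qed

lemma minus_pairs_wrev:
  assumes "even (length w)" "2 \<le> length w"
  shows "minus_pairs (wrev w) = rev (plus_pairs w)"
proof -
  have ne: "w \<noteq> []" using assms by auto
  have "plus_pairs (wrev (wrev w)) = rev (minus_pairs (wrev w))"
    using assms by (intro plus_pairs_wrev) (simp_all add: wrev_length[OF ne])
  then show ?thesis by (simp add: wrev_wrev[OF ne])
qed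

lemma n_w_wrev:
  assumes "even (length w)" "2 \<le> length w"
  shows "n_w d (wrev w) u v = - n_w d w u v"
  by (simp add: n_w_def plus_pairs_wrev[OF assms] minus_pairs_wrev[OF assms] rev_filter[symmetric])

section \<open>Reversibility\<close>

lemma int_shift:
  "0 \<le> int (c u v) + n_w d w u v * \<Delta> \<Longrightarrow> int (shift d w c \<Delta> u v) = int (c u v) + n_w d w u v * \<Delta>"
  by (simp add: shift_def)

lemma
  assumes "\<forall>u v. 0 \<le> int (c u v) + n_w d w u v * \<Delta>\<^sub>0"
  shows shift_shift: "shift d w (shift d w c \<Delta>\<^sub>0) \<Delta> = shift d w c (\<Delta> + \<Delta>\<^sub>0)"
    and Dset_shift: "\<Delta> \<in> Dset d F G0 (shift d w c \<Delta>\<^sub>0) w \<longleftrightarrow> \<Delta> + \<Delta>\<^sub>0 \<in> Dset d F G0 c w"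
proof -
  have *: "int (shift d w c \<Delta>\<^sub>0 u v) + n_w d w u v * \<Delta> = int (c u v) + n_w d w u v * (\<Delta> + \<Delta>\<^sub>0)" for u v
    using assms by (simp add: int_shift algebra_simps)
  show eq: "shift d w (shift d w c \<Delta>\<^sub>0) \<Delta> = shift d w c (\<Delta> + \<Delta>\<^sub>0)"
    unfolding shift_def[of d w "shift d w c \<Delta>\<^sub>0"] * by (simp add: shift_def)
  show "\<Delta> \<in> Dset d F G0 (shift d w c \<Delta>\<^sub>0) w \<longleftrightarrow> \<Delta> + \<Delta>\<^sub>0 \<in> Dset d F G0 c w"
    by (simp add: Dset_def * eq)
qed

lemma
  assumes "even (length w)" "2 \<le> length w"
  shows shift_wrev: "shift d (wrev w) c \<Delta> = shift d w c (- \<Delta>)"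
    and Dset_wrev: "\<Delta> \<in> Dset d F G0 c (wrev w) \<longleftrightarrow> - \<Delta> \<in> Dset d F G0 c w"
  by (auto simp: Dset_def shift_def n_w_wrev[OF assms])

definition Dset_weight :: "bool \<Rightarrow> ('v \<times> 'v) set \<Rightarrow> 'v::finite wgraph \<Rightarrow> 'v wgraph \<Rightarrow> 'v list \<Rightarrow> ennreal" where
  "Dset_weight d F G0 c w = (\<Sum>\<^sub>\<infinity>\<Delta>\<in>Dset d F G0 c w. ennreal (Vprob d F (shift d w c \<Delta>) w))"

definition Dset_to :: "bool \<Rightarrow> ('v \<times> 'v) set \<Rightarrow> 'v::finite wgraph \<Rightarrow> 'v wgraph \<Rightarrow> 'v wgraph \<Rightarrow> 'v list \<Rightarrow> int set" where
  "Dset_to d F G0 c c' w = {\<Delta> \<in> Dset d F G0 c w. shift d w c \<Delta> = c'}"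

text \<open>The contribution of \<open>w\<close> to \<open>move_prob d F G0 c c'\<close> is
  \<open>sel_prob d F c w * Vprob d F c' w * line_factor d F G0 c c' w\<close>.\<close>

definition line_factor :: "bool \<Rightarrow> ('v \<times> 'v) set \<Rightarrow> 'v::finite wgraph \<Rightarrow> 'v wgraph \<Rightarrow> 'v wgraph \<Rightarrow> 'v list \<Rightarrow> ennreal" where
  "line_factor d F G0 c c' w = of_nat (card (Dset_to d F G0 c c' w)) / Dset_weight d F G0 c w"

lemma Dset_weight_shift:
  assumes "\<forall>u v. 0 \<le> int (c u v) + n_w d w u v * \<Delta>\<^sub>0"
  shows "Dset_weight d F G0 (shift d w c \<Delta>\<^sub>0) w = Dset_weight d F G0 c w"
proof -
  have "bij_betw (\<lambda>\<Delta>. \<Delta> + \<Delta>\<^sub>0) (Dset d F G0 (shift d w c \<Delta>\<^sub>0) w) (Dset d F G0 c w)"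
    by (rule bij_betwI[where g = "\<lambda>\<Delta>. \<Delta> - \<Delta>\<^sub>0"]) (auto simp: Dset_shift[OF assms])
  then show ?thesis
    unfolding Dset_weight_def shift_shift[OF assms]
    by (rule infsum_reindex_bij_betw[where f = "\<lambda>\<Delta>. ennreal (Vprob d F (shift d w c \<Delta>) w)"])
qed

lemma Dset_weight_wrev:
  assumes "even (length w)" "2 \<le> length w"
  shows "Dset_weight d F G0 c (wrev w) = Dset_weight d F G0 c w"
proof -
  have ne: "w \<noteq> []" using assms by auto
  have "bij_betw uminus (Dset d F G0 c (wrev w)) (Dset d F G0 c w)"
    by (rule bij_betwI[where g = uminus]) (auto simp: Dset_wrev[OF assms])
  then show ?thesis
    unfolding Dset_weight_def shift_wrev[OF assms] Vprob_wrev[OF ne]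
    by (rule infsum_reindex_bij_betw[where f = "\<lambda>\<Delta>. ennreal (Vprob d F (shift d w c \<Delta>) w)"])
qed

lemma uminus_in_Dset_to:
  assumes "c \<in> graph_space d F G0" "\<Delta> \<in> Dset_to d F G0 c c' w"
  shows "- \<Delta> \<in> Dset_to d F G0 c' c w"
proof -
  have nn: "\<forall>u v. 0 \<le> int (c u v) + n_w d w u v * \<Delta>" and c': "c' = shift d w c \<Delta>"
    using assms(2) by (auto simp: Dset_to_def Dset_def)
  have shift0: "shift d w c 0 = c" by (simp add: shift_def)
  have "- \<Delta> \<in> Dset d F G0 c' w"
    unfolding c' Dset_shift[OF nn] using assms(1) by (simp add: Dset_def shift0)
  moreover have "shift d w c' (- \<Delta>) = c"
    unfolding c' shift_shift[OF nn] by (simp add: shift0)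
  ultimately show ?thesis by (simp add: Dset_to_def)
qed

lemma card_Dset_to_commute:
  assumes "c \<in> graph_space d F G0" "c' \<in> graph_space d F G0"
  shows "card (Dset_to d F G0 c c' w) = card (Dset_to d F G0 c' c w)"
  by (rule bij_betw_same_card[where f = uminus], rule bij_betwI[where g = uminus])
     (use uminus_in_Dset_to assms in fastforce)+

lemma card_Dset_to_wrev:
  assumes "even (length w)" "2 \<le> length w"
  shows "card (Dset_to d F G0 c c' (wrev w)) = card (Dset_to d F G0 c c' w)"
  by (rule bij_betw_same_card[where f = uminus], rule bij_betwI[where g = uminus])
     (auto simp: Dset_to_def Dset_wrev[OF assms] shift_wrev[OF assms])

lemma line_factor_commute:
  assumes "c \<in> graph_space d F G0" "c' \<in> graph_space d F G0"
  shows "line_factor d F G0 c c' w = line_factor d F G0 c' c w"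
proof (cases "Dset_to d F G0 c c' w = {}")
  case True
  then have "Dset_to d F G0 c' c w = {}" using uminus_in_Dset_to[OF assms(2)] by blast
  then show ?thesis using True by (simp add: line_factor_def)
next
  case False
  then obtain \<Delta> where "\<Delta> \<in> Dset_to d F G0 c c' w" by blast
  then have "\<forall>u v. 0 \<le> int (c u v) + n_w d w u v * \<Delta>" "c' = shift d w c \<Delta>"
    by (auto simp: Dset_to_def Dset_def)
  then have "Dset_weight d F G0 c' w = Dset_weight d F G0 c w"
    by (simp add: Dset_weight_shift)
  then show ?thesis
    by (simp add: line_factor_def card_Dset_to_commute[OF assms])
qed

lemma line_factor_wrev:
  assumes "even (length w)" "2 \<le> length w"
  shows "line_factor d F G0 c c' (wrev w) = line_factor d F G0 c c' w"
  by (simp add: line_factor_def Dset_weight_wrev[OF assms] card_Dset_to_wrev[OF assms])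

lemma finite_Dset_to:
  assumes "c \<noteq> c'"
  shows "finite (Dset_to d F G0 c c' w)"
proof -
  have "\<Delta>\<^sub>1 = \<Delta>\<^sub>2" if "\<Delta>\<^sub>1 \<in> Dset_to d F G0 c c' w" "\<Delta>\<^sub>2 \<in> Dset_to d F G0 c c' w" for \<Delta>\<^sub>1 \<Delta>\<^sub>2
  proof -
    have nn: "\<forall>u v. 0 \<le> int (c u v) + n_w d w u v * \<Delta>\<^sub>1" "\<forall>u v. 0 \<le> int (c u v) + n_w d w u v * \<Delta>\<^sub>2"
      and eq: "shift d w c \<Delta>\<^sub>1 = c'" "shift d w c \<Delta>\<^sub>2 = c'"
      using that by (auto simp: Dset_to_def Dset_def)
    have "\<exists>u v. n_w d w u v \<noteq> 0"
    proof (rule ccontr)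
      assume "\<not> ?thesis"
      then have "shift d w c \<Delta>\<^sub>1 = c" by (simp add: shift_def)
      then show False using eq assms by simp
    qed
    then obtain u v where "n_w d w u v \<noteq> 0" by blast
    moreover have "int (c u v) + n_w d w u v * \<Delta>\<^sub>1 = int (c u v) + n_w d w u v * \<Delta>\<^sub>2"
      using int_shift nn eq by metis
    ultimately show ?thesis by simp
  qed
  then have "Dset_to d F G0 c c' w \<subseteq> {\<Delta>}" if "\<Delta> \<in> Dset_to d F G0 c c' w" for \<Delta>
    using that by blast
  then show ?thesis by (metis ex_in_conv finite.emptyI finite_subset finite.insertI)
qed

text \<open>Since \<open>Vprob d F c' w = sel_prob d F c' w + sel_prob d F c' (wrev w)\<close> (when \<open>wrev w \<noteq> w\<close>),
  the contribution of \<open>w\<close> to a move from \<open>c\<close> to \<open>c'\<close> splits into a part that is symmetric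
  in \<open>c\<close>, \<open>c'\<close> and a part that becomes symmetric after reindexing by \<open>wrev\<close>.\<close>

definition move_term_direct :: "bool \<Rightarrow> ('v \<times> 'v) set \<Rightarrow> 'v::finite wgraph \<Rightarrow> 'v wgraph \<Rightarrow> 'v wgraph \<Rightarrow> 'v list \<Rightarrow> ennreal" where
  "move_term_direct d F G0 c c' w =
     ennreal (sel_prob d F c w) * ennreal (sel_prob d F c' w) * line_factor d F G0 c c' w"

definition move_term_reversed :: "bool \<Rightarrow> ('v \<times> 'v) set \<Rightarrow> 'v::finite wgraph \<Rightarrow> 'v wgraph \<Rightarrow> 'v wgraph \<Rightarrow> 'v list \<Rightarrow> ennreal" where
  "move_term_reversed d F G0 c c' w =
     ennreal (sel_prob d F c w) * (if wrev w \<noteq> w then ennreal (sel_prob d F c' (wrev w)) else 0) *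
     line_factor d F G0 c c' w"

lemma move_prob_summand_split:
  assumes "c \<noteq> c'"
  shows "ennreal (sel_prob d F c w) *
           (\<Sum>\<^sub>\<infinity>\<Delta>\<in>{\<Delta> \<in> Dset d F G0 c w. shift d w c \<Delta> = c'}. ennreal (Vprob d F (shift d w c \<Delta>) w)) /
           (\<Sum>\<^sub>\<infinity>\<Delta>\<in>Dset d F G0 c w. ennreal (Vprob d F (shift d w c \<Delta>) w))
         = move_term_direct d F G0 c c' w + move_term_reversed d F G0 c c' w"
proof -
  have "(\<Sum>\<^sub>\<infinity>\<Delta>\<in>{\<Delta> \<in> Dset d F G0 c w. shift d w c \<Delta> = c'}. ennreal (Vprob d F (shift d w c \<Delta>) w))
      = of_nat (card (Dset_to d F G0 c c' w)) * ennreal (Vprob d F c' w)"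
    using finite_Dset_to[OF assms] unfolding Dset_to_def by simp
  then have "ennreal (sel_prob d F c w) *
           (\<Sum>\<^sub>\<infinity>\<Delta>\<in>{\<Delta> \<in> Dset d F G0 c w. shift d w c \<Delta> = c'}. ennreal (Vprob d F (shift d w c \<Delta>) w)) /
           (\<Sum>\<^sub>\<infinity>\<Delta>\<in>Dset d F G0 c w. ennreal (Vprob d F (shift d w c \<Delta>) w))
      = ennreal (sel_prob d F c w) * ennreal (Vprob d F c' w) * line_factor d F G0 c c' w"
    unfolding line_factor_def Dset_weight_def by (simp add: ennreal_times_divide mult_ac)
  also have "\<dots> = move_term_direct d F G0 c c' w + move_term_reversed d F G0 c c' w"
    unfolding move_term_direct_def move_term_reversed_def
    by (simp add: Vprob_split ennreal_plus sel_prob_nonneg distrib_left distrib_right)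
  finally show ?thesis .
qed

lemma move_prob_split:
  assumes "c \<noteq> c'"
  shows "move_prob d F G0 c c' =
           (\<Sum>\<^sub>\<infinity>w. move_term_direct d F G0 c c' w) + (\<Sum>\<^sub>\<infinity>w. move_term_reversed d F G0 c c' w)"
  unfolding move_prob_def move_prob_summand_split[OF assms]
  by (rule infsum_add) (rule nonneg_summable_on_complete, simp)+

definition cycle_words :: "'v list set" where
  "cycle_words = {w. even (length w) \<and> 2 \<le> length w}"

lemma bij_betw_wrev_cycle_words: "bij_betw wrev cycle_words cycle_words"
proof -
  have "wrev w \<in> cycle_words \<and> wrev (wrev w) = w" if "w \<in> cycle_words" for w
  proof -
    have "w \<noteq> []" using that by (auto simp: cycle_words_def)
    then show ?thesis using that by (simp add: cycle_words_def wrev_length wrev_wrev)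
  qed
  then show ?thesis by (intro bij_betwI[where g = wrev]) auto
qed

lemma infsum_move_term_reversed_commute:
  fixes c :: "'v::finite wgraph"
  assumes "c \<in> graph_space d F G0" "c' \<in> graph_space d F G0"
  shows "(\<Sum>\<^sub>\<infinity>w. move_term_reversed d F G0 c c' w) = (\<Sum>\<^sub>\<infinity>w. move_term_reversed d F G0 c' c w)"
proof -
  have outside: "move_term_reversed d F G0 a b w = 0" if "w \<notin> cycle_words" for a b w
  proof -
    have "sel_prob d F a w = 0"
      using that sel_prob_nonzero_imp_length[of d F a w] by (auto simp: cycle_words_def)
    then show ?thesis by (simp add: move_term_reversed_def)
  qed
  have "(\<Sum>\<^sub>\<infinity>w. move_term_reversed d F G0 c c' w) = (\<Sum>\<^sub>\<infinity>w\<in>cycle_words. move_term_reversed d F G0 c c' w)"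
    by (rule infsum_cong_neutral) (auto simp: outside)
  also have "\<dots> = (\<Sum>\<^sub>\<infinity>w\<in>cycle_words. move_term_reversed d F G0 c c' (wrev w))"
    by (rule infsum_reindex_bij_betw[OF bij_betw_wrev_cycle_words, symmetric])
  also have "\<dots> = (\<Sum>\<^sub>\<infinity>w\<in>cycle_words. move_term_reversed d F G0 c' c w)"
  proof (rule infsum_cong)
    fix w :: "'v list" assume "w \<in> cycle_words"
    then have ne: "w \<noteq> []" and len: "even (length w)" "2 \<le> length w"
      by (auto simp: cycle_words_def)
    show "move_term_reversed d F G0 c c' (wrev w) = move_term_reversed d F G0 c' c w"
      unfolding move_term_reversed_def wrev_wrev[OF ne] line_factor_wrev[OF len]
        line_factor_commute[OF assms]
      by (auto simp: mult.commute)
  qed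
  also have "\<dots> = (\<Sum>\<^sub>\<infinity>w. move_term_reversed d F G0 c' c w)"
    by (rule infsum_cong_neutral) (auto simp: outside)
  finally show ?thesis .
qed

lemma move_prob_commute:
  assumes "c \<in> graph_space d F G0" "c' \<in> graph_space d F G0"
  shows "move_prob d F G0 c c' = move_prob d F G0 c' c"
proof (cases "c = c'")
  case False
  have "move_term_direct d F G0 c c' = move_term_direct d F G0 c' c"
    unfolding move_term_direct_def line_factor_commute[OF assms] by (simp add: fun_eq_iff mult_ac)
  then show ?thesis
    using False by (simp add: move_prob_split infsum_move_term_reversed_commute[OF assms])
qed simp

lemma wgs_trans_commute:
  assumes "c \<in> graph_space d F G0" "c' \<in> graph_space d F G0"
  shows "wgs_trans d F G0 c c' = wgs_trans d F G0 c' c"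
  using move_prob_commute[OF assms] by (auto simp: wgs_trans_def)

section \<open>Strength sums and edge counts\<close>

definition out_sum :: "bool \<Rightarrow> ('v::finite \<Rightarrow> 'v \<Rightarrow> int) \<Rightarrow> 'v \<Rightarrow> int" where
  "out_sum d f x = (if d then (\<Sum>v\<in>UNIV. f x v) else (\<Sum>v\<in>UNIV. f x v) + f x x)"

definition in_sum :: "bool \<Rightarrow> ('v::finite \<Rightarrow> 'v \<Rightarrow> int) \<Rightarrow> 'v \<Rightarrow> int" where
  "in_sum d f x = (if d then (\<Sum>v\<in>UNIV. f v x) else (\<Sum>v\<in>UNIV. f x v) + f x x)"

lemma same_strengths_iff_sums:
  "same_strengths d c c' \<longleftrightarrow>
     (\<forall>x. out_sum d (\<lambda>u v. int (c u v)) x = out_sum d (\<lambda>u v. int (c' u v)) x \<and>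
          in_sum d (\<lambda>u v. int (c u v)) x = in_sum d (\<lambda>u v. int (c' u v)) x)"
  by (simp add: same_strengths_def out_sum_def in_sum_def out_strength_def in_strength_def
      ustrength_def flip: of_nat_sum of_nat_add)

lemma out_sum_add: "out_sum d (\<lambda>u v. f u v + g u v) x = out_sum d f x + out_sum d g x"
  by (simp add: out_sum_def sum.distrib)

lemma in_sum_add: "in_sum d (\<lambda>u v. f u v + g u v) x = in_sum d f x + in_sum d g x"
  by (simp add: in_sum_def sum.distrib)

lemma out_sum_diff: "out_sum d (\<lambda>u v. f u v - g u v) x = out_sum d f x - out_sum d g x"
  by (simp add: out_sum_def sum_subtractf)

lemma in_sum_diff: "in_sum d (\<lambda>u v. f u v - g u v) x = in_sum d f x - in_sum d g x"
  by (simp add: in_sum_def sum_subtractf)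

lemma out_sum_scale: "out_sum d (\<lambda>u v. k * f u v) x = k * out_sum d f x"
  by (simp add: out_sum_def sum_distrib_left distrib_left)

lemma in_sum_scale: "in_sum d (\<lambda>u v. k * f u v) x = k * in_sum d f x"
  by (simp add: in_sum_def sum_distrib_left distrib_left)

lemma out_sum_mono: "(\<And>u v. f u v \<le> g u v) \<Longrightarrow> out_sum d f x \<le> out_sum d g x"
  by (auto simp: out_sum_def intro!: sum_mono add_mono)

lemma in_sum_mono: "(\<And>u v. f u v \<le> g u v) \<Longrightarrow> in_sum d f x \<le> in_sum d g x"
  by (auto simp: in_sum_def intro!: sum_mono add_mono)

lemma out_sum_less_imp:
  assumes "out_sum d f x < out_sum d g x"
  shows "\<exists>v. f x v < g x v"
proof (rule ccontr)
  assume "\<not> ?thesis"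
  then have "out_sum d g x \<le> out_sum d f x"
    by (auto simp: out_sum_def not_less intro!: sum_mono add_mono)
  then show False using assms by simp
qed

lemma in_sum_less_imp:
  assumes "in_sum d f x < in_sum d g x"
    and "\<not> d \<Longrightarrow> (\<forall>u v. f u v = f v u \<and> g u v = g v u)"
  shows "\<exists>v. f v x < g v x"
proof (rule ccontr)
  assume "\<not> ?thesis"
  then have "g v x \<le> f v x" for v by (simp add: not_less)
  moreover have "g x v \<le> f x v" if "\<not> d" for v
    using \<open>g v x \<le> f v x\<close> assms(2)[OF that] by metis
  ultimately have "in_sum d g x \<le> in_sum d f x"
    by (auto simp: in_sum_def intro!: sum_mono add_mono)
  then show False using assms by simp
qed

lemma out_sum_nonneg_eq_0:
  assumes "out_sum d f x = 0" "\<And>u v. 0 \<le> f u v"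
  shows "f x v = 0"
proof -
  have "0 \<le> f x x" "0 \<le> (\<Sum>v\<in>UNIV. f x v)" using assms(2) by (simp_all add: sum_nonneg)
  then have "(\<Sum>v\<in>UNIV. f x v) = 0"
    using assms(1) by (auto simp: out_sum_def split: if_splits)
  then show ?thesis using assms(2) sum_nonneg_eq_0_iff[of UNIV "f x"] by simp
qed

lemma out_sums_zero_imp_neg:
  assumes "\<And>x. out_sum d f x = 0" "f u v \<noteq> 0"
  shows "\<exists>a b. f a b < 0"
  using out_sum_nonneg_eq_0[OF assms(1)] assms(2) by (meson not_less)

definition edge_count :: "bool \<Rightarrow> ('v \<times> 'v) list \<Rightarrow> 'v \<Rightarrow> 'v \<Rightarrow> nat" where
  "edge_count d L u v = length (filter (is_edge d u v) L)"

definition tail_count :: "('v \<times> 'v) list \<Rightarrow> 'v \<Rightarrow> int" where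
  "tail_count L x = int (length (filter (\<lambda>q. fst q = x) L))"

definition head_count :: "('v \<times> 'v) list \<Rightarrow> 'v \<Rightarrow> int" where
  "head_count L x = int (length (filter (\<lambda>q. snd q = x) L))"

lemma n_w_edge_count:
  "n_w d w u v = int (edge_count d (plus_pairs w) u v) - int (edge_count d (minus_pairs w) u v)"
  by (simp add: n_w_def edge_count_def)

lemma edge_count_Cons:
  "edge_count d (q # L) u v = (if is_edge d u v q then 1 else 0) + edge_count d L u v"
  by (simp add: edge_count_def)

lemma int_edge_count_Cons:
  "int (edge_count d (q # L) u v) = (if is_edge d u v q then 1 else 0) + int (edge_count d L u v)"
  by (simp add: edge_count_def)

lemma edge_count_append: "edge_count d (L @ L') u v = edge_count d L u v + edge_count d L' u v"
  by (simp add: edge_count_def)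

lemma tail_count_append: "tail_count (L @ L') x = tail_count L x + tail_count L' x"
  by (simp add: tail_count_def)

lemma head_count_append: "head_count (L @ L') x = head_count L x + head_count L' x"
  by (simp add: head_count_def)

lemma edge_count_commute:
  assumes "\<not> d"
  shows "edge_count d L u v = edge_count d L v u"
proof -
  have "is_edge d u v = is_edge d v u" using assms by (auto simp: is_edge_def)
  then show ?thesis by (simp add: edge_count_def)
qed

lemma is_edge_self: "is_edge d (fst q) (snd q) q"
  by (simp add: is_edge_def)

lemma edge_count_is_edge: "is_edge d u v q \<Longrightarrow> edge_count d L u v = edge_count d L (fst q) (snd q)"
  by (cases q) (auto simp: is_edge_def edge_count_commute)

lemma edge_count_pos: "q \<in> set L \<Longrightarrow> 0 < edge_count d L (fst q) (snd q)"
  by (auto simp: edge_count_def filter_empty_conv is_edge_def)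

lemma out_sum_is_edge:
  "out_sum d (\<lambda>u v. if is_edge d u v q then 1 else 0) x =
     (if fst q = x then 1 else 0) + (if d then 0 else (if snd q = x then 1 else 0))"
proof -
  obtain a b where q: "q = (a, b)" by (cases q)
  show ?thesis
  proof (cases d)
    case True
    have "{v. q = (x, v)} = (if a = x then {b} else {})" using q by auto
    then show ?thesis using True q by (simp add: out_sum_def is_edge_def sum.If_cases)
  next
    case False
    have "{v. q = (x, v) \<or> q = (v, x)} = (if a = x then {b} else {}) \<union> (if b = x then {a} else {})"
      using q by auto
    then show ?thesis using False q by (auto simp: out_sum_def is_edge_def sum.If_cases)
  qed
qed

lemma in_sum_is_edge:
  "in_sum d (\<lambda>u v. if is_edge d u v q then 1 else 0) x =
     (if snd q = x then 1 else 0) + (if d then 0 else (if fst q = x then 1 else 0))"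
proof (cases d)
  case True
  obtain a b where q: "q = (a, b)" by (cases q)
  have "{v. q = (v, x)} = (if b = x then {a} else {})" using q by auto
  then show ?thesis using True q by (simp add: in_sum_def is_edge_def sum.If_cases)
next
  case False
  then show ?thesis using out_sum_is_edge[of d q x] by (simp add: in_sum_def out_sum_def)
qed

lemma out_sum_edge_count:
  "out_sum d (\<lambda>u v. int (edge_count d L u v)) x = tail_count L x + (if d then 0 else head_count L x)"
proof (induction L)
  case (Cons q L)
  have "out_sum d (\<lambda>u v. int (edge_count d (q # L) u v)) x =
      out_sum d (\<lambda>u v. (if is_edge d u v q then 1 else 0) + int (edge_count d L u v)) x"
    by (simp add: int_edge_count_Cons)
  also have "\<dots> = out_sum d (\<lambda>u v. if is_edge d u v q then 1 else 0) x +
      out_sum d (\<lambda>u v. int (edge_count d L u v)) x"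
    by (rule out_sum_add)
  finally show ?case using Cons by (simp add: out_sum_is_edge tail_count_def head_count_def)
qed (simp add: edge_count_def tail_count_def head_count_def out_sum_def)

lemma in_sum_edge_count:
  "in_sum d (\<lambda>u v. int (edge_count d L u v)) x = head_count L x + (if d then 0 else tail_count L x)"
proof (induction L)
  case (Cons q L)
  have "in_sum d (\<lambda>u v. int (edge_count d (q # L) u v)) x =
      in_sum d (\<lambda>u v. (if is_edge d u v q then 1 else 0) + int (edge_count d L u v)) x"
    by (simp add: int_edge_count_Cons)
  also have "\<dots> = in_sum d (\<lambda>u v. if is_edge d u v q then 1 else 0) x +
      in_sum d (\<lambda>u v. int (edge_count d L u v)) x"
    by (rule in_sum_add)
  finally show ?case using Cons by (simp add: in_sum_is_edge tail_count_def head_count_def)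
qed (simp add: edge_count_def tail_count_def head_count_def in_sum_def)

lemma length_le_sum_edge_count:
  fixes L :: "('v::finite \<times> 'v) list"
  shows "length L \<le> (\<Sum>u\<in>UNIV. \<Sum>v\<in>UNIV. edge_count d L u v)"
proof (induction L)
  case (Cons q L)
  have "(1::nat) \<le> (\<Sum>v\<in>UNIV. if is_edge d (fst q) v q then 1 else 0)"
    using member_le_sum[of "snd q" UNIV "\<lambda>v. if is_edge d (fst q) v q then 1 else (0::nat)"]
    by (simp add: is_edge_self)
  also have "\<dots> \<le> (\<Sum>u\<in>UNIV. \<Sum>v\<in>UNIV. if is_edge d u v q then 1 else 0)"
    by (rule member_le_sum) auto
  finally show ?case using Cons by (simp add: edge_count_Cons sum.distrib)
qed simp

lemma sum_is_edge_le_2: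
  fixes q :: "'v::finite \<times> 'v"
  shows "(\<Sum>u\<in>UNIV. \<Sum>v\<in>UNIV. if is_edge d u v q then 1 else 0 :: int) \<le> 2"
proof -
  have "(\<Sum>u\<in>UNIV. \<Sum>v\<in>UNIV. if is_edge d u v q then 1 else 0 :: int)
      = (\<Sum>uv\<in>UNIV. if is_edge d (fst uv) (snd uv) q then 1 else 0)"
    by (simp add: sum.cartesian_product UNIV_Times_UNIV[symmetric] case_prod_beta
        del: UNIV_Times_UNIV)
  also have "\<dots> = int (card {uv. is_edge d (fst uv) (snd uv) q})"
    by (simp add: sum.If_cases)
  also have "\<dots> \<le> int (card {q, (snd q, fst q)})"
    by (intro of_nat_mono card_mono) (auto simp: is_edge_def)
  also have "\<dots> \<le> 2" by (simp add: card_insert_le_m1)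
  finally show ?thesis .
qed

section \<open>Partially selected sequences\<close>

text \<open>The minus pairs \<open>w\<^sub>1w\<^sub>2, w\<^sub>3w\<^sub>4, \<dots>\<close> of a prefix, without the closing pair \<open>w\<^sub>kw\<^sub>0\<close>.\<close>

definition open_minus_pairs :: "'v list \<Rightarrow> ('v \<times> 'v) list" where
  "open_minus_pairs p = map (\<lambda>i. (p ! (2 * i + 1), p ! (2 * i + 2))) [0..<(length p - 1) div 2]"

lemma plus_pairs_snoc:
  "plus_pairs (p @ [a]) = (if even (length p) then plus_pairs p else plus_pairs p @ [(a, last p)])"
proof (cases "even (length p)")
  case True
  then have "length (p @ [a]) div 2 = length p div 2" by simp
  then show ?thesis using True by (auto simp: plus_pairs_def nth_append intro!: map_cong)
next
  case False
  then have "length (p @ [a]) div 2 = Suc (length p div 2)" "2 * (length p div 2) + 1 = length p"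
    "p \<noteq> []"
    by auto
  then show ?thesis
    using False by (auto simp: plus_pairs_def nth_append last_conv_nth intro!: map_cong)
qed

lemma open_minus_pairs_snoc:
  assumes "2 \<le> length p"
  shows "open_minus_pairs (p @ [a]) =
           (if even (length p) then open_minus_pairs p @ [(last p, a)] else open_minus_pairs p)"
proof (cases "even (length p)")
  case True
  then have "(length (p @ [a]) - 1) div 2 = Suc ((length p - 1) div 2)"
    "2 * ((length p - 1) div 2) + 1 = length p - 1" "2 * ((length p - 1) div 2) + 2 = length p"
    "p \<noteq> []"
    using assms by (auto elim!: evenE)
  then show ?thesis
    using True assms by (auto simp: open_minus_pairs_def nth_append last_conv_nth intro!: map_cong)
next
  case False
  then have "(length (p @ [a]) - 1) div 2 = (length p - 1) div 2"
    using assms by (auto elim!: oddE)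
  then show ?thesis using False by (auto simp: open_minus_pairs_def nth_append intro!: map_cong)
qed

lemma minus_pairs_eq_open_minus_pairs:
  assumes "even (length w)" "2 \<le> length w"
  shows "minus_pairs w = open_minus_pairs w @ [(last w, w ! 0)]"
proof -
  have "\<exists>k. length w = 2 * Suc k" using assms by presburger
  then obtain k where k: "length w = 2 * Suc k" by blast
  moreover have "w \<noteq> []" using assms by auto
  ultimately show ?thesis
    by (auto simp: minus_pairs_def open_minus_pairs_def last_conv_nth intro!: map_cong)
qed

lemma plus_pair_mem:
  assumes "odd m" "m < length p"
  shows "(p ! m, p ! (m - 1)) \<in> set (plus_pairs p)"
proof -
  have "(m - 1) div 2 < length p div 2" "2 * ((m - 1) div 2) + 1 = m" "2 * ((m - 1) div 2) = m - 1"
    using assms by (auto elim!: oddE)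
  then show ?thesis
    unfolding plus_pairs_def set_map by (intro image_eqI[where x = "(m - 1) div 2"]) auto
qed

lemma open_minus_pair_mem:
  assumes "odd m" "m + 1 < length p"
  shows "(p ! m, p ! (m + 1)) \<in> set (open_minus_pairs p)"
proof -
  have "(m - 1) div 2 < (length p - 1) div 2" "2 * ((m - 1) div 2) + 1 = m"
    using assms by (auto elim!: oddE)
  then show ?thesis
    unfolding open_minus_pairs_def set_map by (intro image_eqI[where x = "(m - 1) div 2"]) auto
qed

lemma minus_pair_mem:
  assumes "odd m" "m < length w"
  shows "(w ! m, w ! ((m + 1) mod length w)) \<in> set (minus_pairs w)"
proof -
  have "(m - 1) div 2 < length w div 2" "2 * ((m - 1) div 2) + 1 = m"
    using assms by (auto elim!: oddE)
  then show ?thesis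
    unfolding minus_pairs_def set_map by (intro image_eqI[where x = "(m - 1) div 2"]) auto
qed

lemma pair_count_balance:
  assumes "2 \<le> length p"
  shows "tail_count (plus_pairs p) x - tail_count (open_minus_pairs p) x =
           (if even (length p) \<and> x = last p then 1 else 0) \<and>
         head_count (plus_pairs p) x - head_count (open_minus_pairs p) x =
           (if x = p ! 0 then 1 else 0) - (if odd (length p) \<and> x = last p then 1 else 0)"
  using assms
proof (induction p rule: rev_induct)
  case (snoc a p)
  show ?case
  proof (cases "length p < 2")
    case True
    then obtain b where "p = [b]" using snoc.prems by (cases p) auto
    then show ?thesis
      by (simp add: plus_pairs_def open_minus_pairs_def tail_count_def head_count_def)
  next
    case False
    then have "p \<noteq> []" by auto
    then show ?thesis
      using snoc.IH False
      by (auto simp: plus_pairs_snoc open_minus_pairs_snoc tail_count_append head_count_append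
          tail_count_def head_count_def nth_append)
  qed
qed simp

lemma
  assumes "even (length w)" "2 \<le> length w"
  shows out_sum_n_w: "out_sum d (n_w d w) x = 0"
    and in_sum_n_w: "in_sum d (n_w d w) x = 0"
proof -
  have "n_w d w = (\<lambda>u v. int (edge_count d (plus_pairs w) u v) -
                        int (edge_count d (open_minus_pairs w @ [(last w, w ! 0)]) u v))"
    by (simp add: fun_eq_iff n_w_edge_count minus_pairs_eq_open_minus_pairs[OF assms])
  moreover have "tail_count [(last w, w ! 0)] x = (if x = last w then 1 else 0)"
    "head_count [(last w, w ! 0)] x = (if x = w ! 0 then 1 else 0)"
    by (auto simp: tail_count_def head_count_def)
  ultimately show "out_sum d (n_w d w) x = 0" "in_sum d (n_w d w) x = 0"
    using pair_count_balance[OF assms(2), of x] assms(1)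
    by (simp_all add: out_sum_diff in_sum_diff out_sum_edge_count in_sum_edge_count
        tail_count_append head_count_append)
qed

lemma n_w_commute: "\<not> d \<Longrightarrow> n_w d w u v = n_w d w v u"
  by (simp add: n_w_edge_count edge_count_commute)

lemma shift_in_graph_space:
  assumes c: "c \<in> graph_space d F G0" and w: "even (length w)" "2 \<le> length w"
    and nonneg: "\<forall>u v. 0 \<le> int (c u v) + n_w d w u v * \<Delta>"
    and fixed: "\<And>u v. in_F d F u v \<Longrightarrow> n_w d w u v = 0"
  shows "shift d w c \<Delta> \<in> graph_space d F G0"
proof -
  have shift: "(\<lambda>u v. int (shift d w c \<Delta> u v)) = (\<lambda>u v. int (c u v) + \<Delta> * n_w d w u v)"
    using nonneg by (simp add: fun_eq_iff int_shift mult.commute)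
  have "is_graph d (shift d w c \<Delta>)"
    using c by (auto simp: is_graph_def graph_space_def shift_def n_w_commute)
  moreover have "same_strengths d c (shift d w c \<Delta>)"
    unfolding same_strengths_iff_sums shift
    by (simp add: out_sum_add in_sum_add out_sum_scale in_sum_scale out_sum_n_w[OF w] in_sum_n_w[OF w])
  ultimately show ?thesis
    using c fixed by (auto simp: graph_space_def same_strengths_def shift_def split: if_splits)
qed

definition selectable :: "bool \<Rightarrow> ('v \<times> 'v) set \<Rightarrow> 'v wgraph \<Rightarrow> 'v list \<Rightarrow> bool" where
  "selectable d F c p \<longleftrightarrow> (\<forall>j\<in>{1..<length p}. 0 < step_factor d F c p j)"

definition closable :: "bool \<Rightarrow> ('v \<times> 'v) set \<Rightarrow> 'v list \<Rightarrow> bool" where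
  "closable d F p \<longleftrightarrow> p ! 0 \<in> Mset d F (last p) - {p ! (length p - 2)}"

lemma step_factor_pos_odd:
  fixes w :: "'v::finite list"
  assumes "odd j"
  shows "0 < step_factor d F c w j \<longleftrightarrow>
           w ! j \<in> Nbr d F c (w ! (j - 1)) - (if j = 1 then {} else {w ! (j - 2)})"
  using assms by (simp add: step_factor_def unif_pick_pos_iff)

lemma step_factor_pos_even:
  fixes w :: "'v::finite list"
  assumes "even j"
  shows "0 < step_factor d F c w j \<longleftrightarrow>
           w ! 0 \<notin> Mset d F (w ! (j - 1)) - {w ! (j - 2)} \<and> w ! j \<in> Mset d F (w ! (j - 1)) - {w ! (j - 2)}"
  using assms by (simp add: step_factor_def unif_pick_pos_iff)

lemma selectable_odd:
  fixes p :: "'v::finite list"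
  assumes "selectable d F c p" "odd j" "j < length p"
  shows "p ! j \<in> Nbr d F c (p ! (j - 1)) - (if j = 1 then {} else {p ! (j - 2)})"
  using assms step_factor_pos_odd[of j d F c p] by (auto simp: selectable_def elim!: oddE)

lemma selectable_even:
  fixes p :: "'v::finite list"
  assumes "selectable d F c p" "even j" "2 \<le> j" "j < length p"
  shows "p ! 0 \<notin> Mset d F (p ! (j - 1)) - {p ! (j - 2)} \<and> p ! j \<in> Mset d F (p ! (j - 1)) - {p ! (j - 2)}"
  using assms step_factor_pos_even[of j d F c p] by (auto simp: selectable_def)

text \<open>Kernel selection closes as soon as it can, so it never revisits \<open>w\<^sub>0\<close> at an even position.\<close>

lemma selectable_even_ne_start:
  fixes p :: "'v::finite list"
  assumes "selectable d F c p" "even j" "2 \<le> j" "j < length p"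
  shows "p ! j \<noteq> p ! 0"
  using selectable_even[OF assms] by auto

lemma selectable_snoc:
  assumes "selectable d F c p" "0 < step_factor d F c (p @ [v]) (length p)"
  shows "selectable d F c (p @ [v])"
proof -
  have "step_factor d F c (p @ [v]) j = step_factor d F c p j" if "1 \<le> j" "j < length p" for j
  proof -
    have "j - 1 < length p" "j - 2 < length p" "0 < length p" using that by auto
    then show ?thesis using that by (simp add: step_factor_def nth_append)
  qed
  then show ?thesis
    using assms by (auto simp: selectable_def less_Suc_eq)
qed

lemma closable_length: "closable d F p \<Longrightarrow> length p \<noteq> 2"
  by (auto simp: closable_def last_conv_nth)

lemma sel_prob_pos:
  fixes w :: "'v::finite list"
  assumes "even (length w)" "2 \<le> length w" "selectable d F c w" "closable d F w"
  shows "0 < sel_prob d F c w"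
proof -
  have "w ! 0 \<in> start_set d F c"
    using selectable_odd[OF assms(3), of 1] assms(2) by (auto simp: start_set_def)
  moreover have "0 < (\<Prod>j\<in>{1..length w - 1}. step_factor d F c w j)"
    using assms(2,3) by (intro prod_pos) (auto simp: selectable_def)
  moreover have "w ! 0 \<in> Mset d F (w ! (length w - 1)) - {w ! (length w - 1 - 1)}"
  proof -
    have "w \<noteq> []" using assms(2) by auto
    then show ?thesis using assms(4) by (simp add: closable_def last_conv_nth numeral_2_eq_2)
  qed
  ultimately show ?thesis
    using assms(1,2) by (simp add: sel_prob_def Let_def unif_pick_pos_iff)
qed

text \<open>Reversing a selectable closed sequence: the odd steps of \<open>wrev w\<close> run backwards along the
  minus pairs of \<open>w\<close>, and its even steps backwards along the plus pairs. Thus \<open>wrev w\<close> can be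
  selected from every graph that has all minus pairs of \<open>w\<close> as edges.\<close>

context
  fixes d :: bool and F :: "('v::finite \<times> 'v) set" and c H :: "'v wgraph" and w :: "'v list"
  assumes even_length: "even (length w)" and length_ge_2: "2 \<le> length w"
    and selectable: "selectable d F c w" and closable: "closable d F w"
    and minus_pairs_pos: "\<forall>q\<in>set (minus_pairs w). 0 < H (fst q) (snd q)"
begin

lemma nonempty: "w \<noteq> []"
  using length_ge_2 by auto

lemma length_ge_4: "4 \<le> length w"
  using even_length length_ge_2 closable_length[OF closable] by presburger

lemma wrev_nth_diff:
  assumes "j < length w" "length w - j = k"
  shows "wrev w ! j = w ! (k mod length w)"
  using wrev_nth[OF assms(1)] assms(2) by simp

lemma selectable_wrev_odd:
  assumes "odd j" "j < length w"
  shows "0 < step_factor d F H (wrev w) j"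
proof -
  define m where "m = length w - j"
  have m: "odd m" "m < length w" "1 \<le> j" "1 \<le> m"
    using assms even_length odd_pos[OF assms(1)] by (auto simp: m_def elim!: oddE)
  have x_j: "wrev w ! j = w ! m" and x_prev: "wrev w ! (j - 1) = w ! ((m + 1) mod length w)"
    using wrev_nth_diff[of j m] wrev_nth_diff[of "j - 1" "m + 1"] assms m by (auto simp: m_def)
  have not_fixed: "\<not> in_F d F (w ! m) (w ! ((m + 1) mod length w))"
  proof (cases "m + 1 < length w")
    case True
    then show ?thesis
      using selectable_even[OF selectable, of "m + 1"] m by (simp add: Mset_def)
  next
    case False
    then have "m + 1 = length w" using m by simp
    moreover have "w \<noteq> []" using m by auto
    ultimately have "w ! m = last w" by (metis add_diff_cancel_right' last_conv_nth)
    then show ?thesis using closable \<open>m + 1 = length w\<close> by (simp add: closable_def Mset_def)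
  qed
  have "0 < H (w ! m) (w ! ((m + 1) mod length w))"
    using minus_pairs_pos minus_pair_mem[OF m(1,2)] by fastforce
  then have "wrev w ! j \<in> Nbr d F H (wrev w ! (j - 1))"
    unfolding x_j x_prev using not_fixed by (simp add: Nbr_def)
  moreover have "wrev w ! j \<noteq> wrev w ! (j - 2)" if "j \<noteq> 1"
  proof -
    have "m + 2 < length w" "odd (m + 2)" using that assms m by (auto simp: m_def elim!: oddE)
    then have "w ! (m + 2) \<noteq> w ! m" using selectable_odd[OF selectable, of "m + 2"] by simp
    moreover have "wrev w ! (j - 2) = w ! (m + 2)"
      using wrev_nth_diff[of "j - 2" "m + 2"] \<open>m + 2 < length w\<close> assms that m
      by (auto simp: m_def elim!: oddE)
    ultimately show ?thesis using x_j by simp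
  qed
  ultimately show ?thesis using step_factor_pos_odd[OF assms(1), of d F H "wrev w"] by auto
qed

lemma selectable_wrev_even:
  assumes "even j" "2 \<le> j" "j < length w"
  shows "0 < step_factor d F H (wrev w) j"
proof -
  define m where "m = length w + 1 - j"
  have m: "odd m" "3 \<le> m" "m < length w"
    using assms even_length by (auto simp: m_def elim!: evenE)
  have x_0: "wrev w ! 0 = w ! 0" using wrev_nth0[OF nonempty] .
  have x_prev: "wrev w ! (j - 1) = w ! m"
    and x_j: "wrev w ! j = w ! (m - 1)" and x_prev2: "wrev w ! (j - 2) = w ! ((m + 1) mod length w)"
    using wrev_nth_diff[of "j - 1" m] wrev_nth_diff[of j "m - 1"]
      wrev_nth_diff[of "j - 2" "m + 1"] assms m length_ge_2
    by (auto simp: m_def)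
  have "w ! m \<in> Nbr d F c (w ! (m - 1))" using selectable_odd[OF selectable m(1,3)] by simp
  then have in_M: "w ! (m - 1) \<in> Mset d F (w ! m)" by (simp add: Nbr_def Mset_def)
  have not_start: "w ! (m - 1) \<noteq> w ! 0"
    using selectable_even_ne_start[OF selectable, of "m - 1"] m by (auto elim!: oddE)
  show ?thesis
  proof (cases "m + 1 < length w")
    case True
    then have "(m + 1) mod length w = m + 1" by simp
    moreover have "w ! 0 \<notin> Mset d F (w ! m) - {w ! (m - 1)}"
      and "w ! (m + 1) \<in> Mset d F (w ! m) - {w ! (m - 1)}"
      using selectable_even[OF selectable, of "m + 1"] True m by auto
    ultimately show ?thesis
      using step_factor_pos_even[OF assms(1), of d F H "wrev w"] x_0 x_prev x_j x_prev2 in_M not_start by auto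
  next
    case False
    then have "m + 1 = length w" using m by simp
    then have "m - 1 = length w - 2" by simp
    then have "w ! (m - 1) \<noteq> w ! 0"
      using closable by (auto simp: closable_def)
    then show ?thesis
      using step_factor_pos_even[OF assms(1), of d F H "wrev w"] x_0 x_prev x_j x_prev2 in_M \<open>m + 1 = length w\<close>
      by auto
  qed
qed

lemma closable_wrev: "closable d F (wrev w)"
proof -
  have len: "length (wrev w) = length w" using wrev_length[OF nonempty] .
  then have "last (wrev w) = wrev w ! (length w - 1)"
    using nonempty by (metis last_conv_nth length_0_conv)
  then have "last (wrev w) = w ! 1" "wrev w ! (length (wrev w) - 2) = w ! 2" "wrev w ! 0 = w ! 0"
    using wrev_nth_diff[of "length w - 1" 1] wrev_nth_diff[of "length w - 2" 2] wrev_nth0[OF nonempty]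
      length_ge_4 len
    by auto
  moreover have "w ! 1 \<in> Nbr d F c (w ! 0)"
    using selectable_odd[OF selectable, of 1] length_ge_2 by simp
  moreover have "w ! 2 \<noteq> w ! 0"
    using selectable_even_ne_start[OF selectable, of 2] length_ge_4 by simp
  ultimately show ?thesis by (auto simp: closable_def Nbr_def Mset_def)
qed

lemma sel_prob_wrev_pos: "0 < sel_prob d F H (wrev w)"
proof -
  have len: "length (wrev w) = length w" using wrev_length[OF nonempty] .
  have "0 < step_factor d F H (wrev w) j" if "1 \<le> j" "j < length w" for j
  proof (cases "odd j")
    case False
    then have "2 \<le> j" using that by (auto elim!: evenE)
    then show ?thesis using False that selectable_wrev_even by simp
  qed (use that selectable_wrev_odd in simp)
  then have "selectable d F H (wrev w)" by (simp add: selectable_def len)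
  then show ?thesis
    using sel_prob_pos[of "wrev w"] even_length length_ge_2 closable_wrev by (simp add: len)
qed

end

section \<open>Alternating walks between two graphs\<close>

lemma edge_count_snoc_le:
  assumes "\<forall>a b. int (edge_count d L a b) \<le> max 0 (f a b)"
    and "int (edge_count d L u v) < max 0 (f u v)"
    and "\<And>a b. is_edge d a b (u, v) \<Longrightarrow> f a b = f u v"
  shows "\<forall>a b. int (edge_count d (L @ [(u, v)]) a b) \<le> max 0 (f a b)"
proof (intro allI)
  fix a b
  show "int (edge_count d (L @ [(u, v)]) a b) \<le> max 0 (f a b)"
  proof (cases "is_edge d a b (u, v)")
    case True
    then show ?thesis
      using assms(2,3) edge_count_is_edge[OF True, of L] by (simp add: edge_count_append edge_count_def)
  qed (use assms(1) in \<open>simp add: edge_count_append edge_count_def\<close>)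
qed

locale graph_pair =
  fixes d :: bool and F :: "('v::finite \<times> 'v) set" and G0 G G' :: "'v wgraph"
  assumes G_space: "G \<in> graph_space d F G0" and G'_space: "G' \<in> graph_space d F G0"
begin

definition D :: "'v \<Rightarrow> 'v \<Rightarrow> int" where
  "D u v = int (G' u v) - int (G u v)"

lemma D_commute: "\<not> d \<Longrightarrow> D u v = D v u"
  using G_space G'_space by (simp add: D_def graph_space_def is_graph_def)

lemma D_is_edge: "is_edge d u v q \<Longrightarrow> D u v = D (fst q) (snd q)"
  by (cases q) (auto simp: is_edge_def D_commute)

lemma D_in_F: "in_F d F u v \<Longrightarrow> D u v = 0"
  using G_space G'_space by (simp add: D_def graph_space_def)

lemma
  shows out_sum_D: "out_sum d D x = 0"
    and in_sum_D: "in_sum d D x = 0"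
proof -
  have "same_strengths d G0 G" "same_strengths d G0 G'"
    using G_space G'_space by (simp_all add: graph_space_def)
  moreover have "D = (\<lambda>u v. int (G' u v) - int (G u v))" by (simp add: fun_eq_iff D_def)
  ultimately show "out_sum d D x = 0" "in_sum d D x = 0"
    by (simp_all add: same_strengths_iff_sums out_sum_diff in_sum_diff)
qed

lemma
  shows out_sum_pos_part_D: "out_sum d (\<lambda>a b. max 0 (D a b)) x = out_sum d (\<lambda>a b. max 0 (- D a b)) x"
    and in_sum_pos_part_D: "in_sum d (\<lambda>a b. max 0 (D a b)) x = in_sum d (\<lambda>a b. max 0 (- D a b)) x"
proof -
  have "(\<lambda>a b. max 0 (D a b) - max 0 (- D a b)) = D" by (auto simp: fun_eq_iff)
  then show "out_sum d (\<lambda>a b. max 0 (D a b)) x = out_sum d (\<lambda>a b. max 0 (- D a b)) x"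
    "in_sum d (\<lambda>a b. max 0 (D a b)) x = in_sum d (\<lambda>a b. max 0 (- D a b)) x"
    using out_sum_diff[of d "\<lambda>a b. max 0 (D a b)" "\<lambda>a b. max 0 (- D a b)" x]
      in_sum_diff[of d "\<lambda>a b. max 0 (D a b)" "\<lambda>a b. max 0 (- D a b)" x] out_sum_D[of x] in_sum_D[of x]
    by simp_all
qed

lemma exists_D_neg:
  assumes "G \<noteq> G'"
  shows "\<exists>a b. D a b < 0"
proof -
  have "\<exists>u v. D u v \<noteq> 0" using assms by (auto simp: fun_eq_iff D_def) metis
  then obtain u v where "D u v \<noteq> 0" by blast
  then show ?thesis using out_sums_zero_imp_neg[OF out_sum_D] by blast
qed

text \<open>Prefixes of a kernel selection from \<open>G\<close> that, applied with \<open>\<Delta> = -1\<close>, only move weights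
  towards \<open>G'\<close>: plus pairs use edges where \<open>G\<close> exceeds \<open>G'\<close>, minus pairs edges where \<open>G'\<close> exceeds
  \<open>G\<close>, each at most \<open>\<bar>D\<bar>\<close> times.\<close>

definition alt_walk :: "'v list \<Rightarrow> bool" where
  "alt_walk p \<longleftrightarrow> 2 \<le> length p \<and> selectable d F G p \<and>
     (\<forall>u v. int (edge_count d (plus_pairs p) u v) \<le> max 0 (- D u v)) \<and>
     (\<forall>u v. int (edge_count d (open_minus_pairs p) u v) \<le> max 0 (D u v))"

lemma alt_walk_plus_pair_neg:
  assumes "alt_walk p" "q \<in> set (plus_pairs p)"
  shows "D (fst q) (snd q) < 0"
proof -
  have "0 < int (edge_count d (plus_pairs p) (fst q) (snd q))" using edge_count_pos[OF assms(2)] by simp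
  moreover have "int (edge_count d (plus_pairs p) (fst q) (snd q)) \<le> max 0 (- D (fst q) (snd q))"
    using assms(1) by (simp add: alt_walk_def)
  ultimately show ?thesis by (simp add: max_def split: if_splits)
qed

lemma alt_walk_open_minus_pair_pos:
  assumes "alt_walk p" "q \<in> set (open_minus_pairs p)"
  shows "0 < D (fst q) (snd q)"
proof -
  have "0 < int (edge_count d (open_minus_pairs p) (fst q) (snd q))" using edge_count_pos[OF assms(2)] by simp
  moreover have "int (edge_count d (open_minus_pairs p) (fst q) (snd q)) \<le> max 0 (D (fst q) (snd q))"
    using assms(1) by (simp add: alt_walk_def)
  ultimately show ?thesis by (simp add: max_def split: if_splits)
qed

lemma alt_walk_init:
  assumes "D a b < 0"
  shows "alt_walk [b, a]"
proof -
  have "int (edge_count d [(a, b)] u v) \<le> max 0 (- D u v)" for u v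
    using assms D_is_edge[of u v "(a, b)"] by (simp add: edge_count_def)
  moreover have "\<not> in_F d F a b" using assms D_in_F[of a b] by auto
  then have "0 < step_factor d F G [b, a] 1"
    using assms by (simp add: step_factor_pos_odd Nbr_def D_def)
  ultimately show ?thesis
    by (simp add: alt_walk_def selectable_def plus_pairs_def open_minus_pairs_def
        edge_count_def)
qed

lemma alt_walk_length:
  assumes "alt_walk p"
  shows "length p \<le> 2 * (\<Sum>u\<in>UNIV. \<Sum>v\<in>UNIV. nat (- D u v)) + 1"
proof -
  have "length p div 2 = length (plus_pairs p)" by (simp add: plus_pairs_def)
  also have "\<dots> \<le> (\<Sum>u\<in>UNIV. \<Sum>v\<in>UNIV. edge_count d (plus_pairs p) u v)"
    by (rule length_le_sum_edge_count)
  also have "\<dots> \<le> (\<Sum>u\<in>UNIV. \<Sum>v\<in>UNIV. nat (- D u v))"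
  proof (intro sum_mono)
    fix u v
    have "int (edge_count d (plus_pairs p) u v) \<le> max 0 (- D u v)"
      using assms by (simp add: alt_walk_def)
    then show "edge_count d (plus_pairs p) u v \<le> nat (- D u v)"
      by (cases "0 \<le> - D u v") (simp_all add: le_nat_iff max_def)
  qed
  finally show ?thesis by linarith
qed

text \<open>The next vertex exists because the strengths of \<open>G\<close> and \<open>G'\<close> agree: at the last vertex of a
  walk, the pairs used so far are unbalanced, while the positive and negative parts of \<open>D\<close> are
  balanced.\<close>

lemma alt_walk_out_edge:
  assumes "alt_walk p" "even (length p)"
  shows "\<exists>v. int (edge_count d (open_minus_pairs p) (last p) v) < max 0 (D (last p) v)"
proof -
  have "2 \<le> length p" using assms by (simp add: alt_walk_def)
  then have "out_sum d (\<lambda>a b. int (edge_count d (open_minus_pairs p) a b)) (last p)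
      < out_sum d (\<lambda>a b. int (edge_count d (plus_pairs p) a b)) (last p)"
    using pair_count_balance[of p "last p"] assms(2) by (auto simp: out_sum_edge_count split: if_splits)
  also have "\<dots> \<le> out_sum d (\<lambda>a b. max 0 (D a b)) (last p)"
    using assms(1) by (simp add: out_sum_pos_part_D alt_walk_def out_sum_mono)
  finally show ?thesis by (rule out_sum_less_imp)
qed

lemma alt_walk_in_edge:
  assumes "alt_walk p" "odd (length p)"
  shows "\<exists>v. int (edge_count d (plus_pairs p) v (last p)) < max 0 (- D v (last p))"
proof -
  have len: "2 \<le> length p" and sel: "selectable d F G p" using assms by (simp_all add: alt_walk_def)
  have "p \<noteq> []" using len by auto
  then have "last p = p ! (length p - 1)" by (rule last_conv_nth)
  then have "last p \<noteq> p ! 0"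
    using selectable_even_ne_start[OF sel, of "length p - 1"] len assms(2) by (auto elim!: oddE)
  then have "in_sum d (\<lambda>a b. int (edge_count d (plus_pairs p) a b)) (last p)
      < in_sum d (\<lambda>a b. int (edge_count d (open_minus_pairs p) a b)) (last p)"
    using pair_count_balance[OF len, of "last p"] assms(2) by (auto simp: in_sum_edge_count)
  also have "\<dots> \<le> in_sum d (\<lambda>a b. max 0 (- D a b)) (last p)"
    using assms(1) by (simp add: in_sum_pos_part_D[symmetric] alt_walk_def in_sum_mono)
  finally show ?thesis
    by (rule in_sum_less_imp) (simp add: edge_count_commute D_commute)
qed

lemma alt_walk_extend_even:
  assumes walk: "alt_walk p" and even: "even (length p)" and open_walk: "\<not> closable d F p"
  shows "\<exists>v. alt_walk (p @ [v])"
proof -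
  obtain v where v: "int (edge_count d (open_minus_pairs p) (last p) v) < max 0 (D (last p) v)"
    using alt_walk_out_edge[OF walk even] by blast
  define k where "k = length p - 1"
  have len: "2 \<le> length p" using walk by (simp add: alt_walk_def)
  then have "p \<noteq> []" by auto
  then have k: "odd k" "k < length p" "p ! k = last p" "length p - 2 = k - 1"
    using even len by (auto simp: k_def last_conv_nth)
  have "D (last p) (p ! (k - 1)) < 0"
    using alt_walk_plus_pair_neg[OF walk plus_pair_mem[OF k(1,2)]] k by simp
  moreover have "0 < D (last p) v" using v by linarith
  ultimately have v_new: "v \<in> Mset d F (last p) - {p ! (k - 1)}"
    using D_in_F[of "last p" v] by (auto simp: Mset_def)
  moreover have "p ! 0 \<notin> Mset d F (last p) - {p ! (k - 1)}"
    using open_walk k by (simp add: closable_def)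
  ultimately have "0 < step_factor d F G (p @ [v]) (length p)"
    using step_factor_pos_even[of "length p" d F G "p @ [v]"] even len k
    by (auto simp: nth_append k_def)
  moreover have "\<forall>a b. int (edge_count d (open_minus_pairs p @ [(last p, v)]) a b) \<le> max 0 (D a b)"
    using walk v D_is_edge by (intro edge_count_snoc_le) (auto simp: alt_walk_def)
  ultimately have "alt_walk (p @ [v])"
    using walk even len unfolding alt_walk_def
    by (simp add: selectable_snoc plus_pairs_snoc open_minus_pairs_snoc)
  then show ?thesis ..
qed

lemma alt_walk_extend_odd:
  assumes walk: "alt_walk p" and odd: "odd (length p)"
  shows "\<exists>v. alt_walk (p @ [v])"
proof -
  obtain v where v: "int (edge_count d (plus_pairs p) v (last p)) < max 0 (- D v (last p))"
    using alt_walk_in_edge[OF walk odd] by blast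
  define k where "k = length p - 1"
  have len: "2 \<le> length p" using walk by (simp add: alt_walk_def)
  then have "p \<noteq> []" by auto
  then have k: "odd (k - 1)" "k - 1 + 1 < length p" "p ! k = last p" "length p - 2 = k - 1" "k \<noteq> 0"
    using odd len by (auto simp: k_def last_conv_nth elim!: oddE)
  have "0 < D (p ! (k - 1)) (last p)"
    using alt_walk_open_minus_pair_pos[OF walk open_minus_pair_mem[OF k(1,2)]] k by simp
  moreover have "D v (last p) < 0" using v by linarith
  ultimately have "v \<in> Nbr d F G (last p) - {p ! (k - 1)}"
    using D_in_F[of v "last p"] by (auto simp: Nbr_def D_def)
  then have "0 < step_factor d F G (p @ [v]) (length p)"
    using step_factor_pos_odd[of "length p" d F G "p @ [v]"] odd len k
    by (auto simp: nth_append k_def)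
  moreover have "\<forall>a b. int (edge_count d (plus_pairs p @ [(v, last p)]) a b) \<le> max 0 (- D a b)"
    using walk v D_is_edge by (intro edge_count_snoc_le) (auto simp: alt_walk_def)
  ultimately have "alt_walk (p @ [v])"
    using walk odd len unfolding alt_walk_def
    by (simp add: selectable_snoc plus_pairs_snoc open_minus_pairs_snoc)
  then show ?thesis ..
qed

lemma closable_alt_walk_exists:
  assumes "G \<noteq> G'"
  shows "\<exists>w. alt_walk w \<and> even (length w) \<and> closable d F w"
proof -
  define bound where "bound = 2 * (\<Sum>u\<in>UNIV. \<Sum>v\<in>UNIV. nat (- D u v)) + 2"
  have "\<exists>w. alt_walk w \<and> even (length w) \<and> closable d F w" if "alt_walk p" for p
    using that
  proof (induction "bound - length p" arbitrary: p rule: less_induct)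
    case less
    show ?case
    proof (cases "even (length p) \<and> closable d F p")
      case False
      then obtain v where "alt_walk (p @ [v])"
        using alt_walk_extend_even alt_walk_extend_odd less.prems by blast
      moreover have "length p < bound"
        using alt_walk_length[OF less.prems] by (simp add: bound_def)
      ultimately show ?thesis using less.hyps by force
    qed (use less.prems in blast)
  qed
  then show ?thesis using alt_walk_init exists_D_neg[OF assms] by blast
qed

end

section \<open>Moving strictly closer to a target graph\<close>

definition weight_dist :: "'v::finite wgraph \<Rightarrow> 'v wgraph \<Rightarrow> int" where
  "weight_dist c c' = (\<Sum>u\<in>UNIV. \<Sum>v\<in>UNIV. \<bar>int (c u v) - int (c' u v)\<bar>)"

lemma weight_dist_nonneg: "0 \<le> weight_dist c c'"
  by (simp add: weight_dist_def sum_nonneg)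

lemma ennreal_le_infsum:
  assumes "a \<in> A"
  shows "(f a :: ennreal) \<le> infsum f A"
proof -
  have "infsum f {a} \<le> infsum f A"
    by (rule infsum_mono_neutral) (use assms in \<open>auto intro: nonneg_summable_on_complete\<close>)
  then show ?thesis by simp
qed

lemma sel_prob_wrev_le_Vprob: "sel_prob d F c (wrev w) \<le> Vprob d F c w"
  unfolding Vprob_def by (rule member_le_sum) (auto simp: sel_prob_nonneg)

lemma finite_Dset:
  assumes "even (length w)" "2 \<le> length w" "n_w d w u v \<noteq> 0"
  shows "finite (Dset d F G0 c w)"
proof -
  obtain u\<^sub>1 v\<^sub>1 where neg: "n_w d w u\<^sub>1 v\<^sub>1 < 0"
    using out_sums_zero_imp_neg[of d "n_w d w"] out_sum_n_w[OF assms(1,2)] assms(3) by blast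
  have "out_sum d (\<lambda>a b. - n_w d w a b) x = 0" for x
    using out_sum_scale[where k = "- 1" and f = "n_w d w"] out_sum_n_w[OF assms(1,2)] by simp
  then obtain u\<^sub>2 v\<^sub>2 where pos: "0 < n_w d w u\<^sub>2 v\<^sub>2"
    using out_sums_zero_imp_neg[of d "\<lambda>a b. - n_w d w a b" u v] assms(3) by auto
  have "Dset d F G0 c w \<subseteq> {- int (c u\<^sub>2 v\<^sub>2) .. int (c u\<^sub>1 v\<^sub>1)}"
  proof
    fix \<Delta> assume "\<Delta> \<in> Dset d F G0 c w"
    then have nonneg: "0 \<le> int (c u\<^sub>1 v\<^sub>1) + n_w d w u\<^sub>1 v\<^sub>1 * \<Delta>" "0 \<le> int (c u\<^sub>2 v\<^sub>2) + n_w d w u\<^sub>2 v\<^sub>2 * \<Delta>"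
      by (auto simp: Dset_def)
    show "\<Delta> \<in> {- int (c u\<^sub>2 v\<^sub>2) .. int (c u\<^sub>1 v\<^sub>1)}"
    proof (cases "0 \<le> \<Delta>")
      case True
      then have "n_w d w u\<^sub>1 v\<^sub>1 * \<Delta> \<le> - \<Delta>"
        using mult_right_mono[of "n_w d w u\<^sub>1 v\<^sub>1" "- 1" \<Delta>] neg by simp
      then have "\<Delta> \<le> int (c u\<^sub>1 v\<^sub>1)" using nonneg(1) by linarith
      then show ?thesis using True by simp
    next
      case False
      then have "n_w d w u\<^sub>2 v\<^sub>2 * \<Delta> \<le> \<Delta>"
        using mult_right_mono_neg[of 1 "n_w d w u\<^sub>2 v\<^sub>2" \<Delta>] pos by simp
      then have "- int (c u\<^sub>2 v\<^sub>2) \<le> \<Delta>" using nonneg(2) by linarith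
      then show ?thesis using False by simp
    qed
  qed
  then show ?thesis by (rule finite_subset) simp
qed

lemma wgs_trans_pos:
  assumes sel: "0 < sel_prob d F c w" and \<Delta>: "\<Delta> \<in> Dset d F G0 c w"
    and V: "0 < Vprob d F (shift d w c \<Delta>) w" and fin: "finite (Dset d F G0 c w)"
  shows "0 < wgs_trans d F G0 c (shift d w c \<Delta>)"
proof -
  let ?V = "\<lambda>\<Delta>'. ennreal (Vprob d F (shift d w c \<Delta>') w)"
  have "0 < ?V \<Delta>" using V by simp
  also have "?V \<Delta> \<le> (\<Sum>\<^sub>\<infinity>\<Delta>'\<in>{\<Delta>' \<in> Dset d F G0 c w. shift d w c \<Delta>' = shift d w c \<Delta>}. ?V \<Delta>')"
    by (rule ennreal_le_infsum) (use \<Delta> in simp)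
  finally have "0 < (\<Sum>\<^sub>\<infinity>\<Delta>'\<in>{\<Delta>' \<in> Dset d F G0 c w. shift d w c \<Delta>' = shift d w c \<Delta>}. ?V \<Delta>')" .
  moreover have "(\<Sum>\<^sub>\<infinity>\<Delta>'\<in>Dset d F G0 c w. ?V \<Delta>') < top" using fin by simp
  ultimately have "0 < ennreal (sel_prob d F c w) *
      (\<Sum>\<^sub>\<infinity>\<Delta>'\<in>{\<Delta>' \<in> Dset d F G0 c w. shift d w c \<Delta>' = shift d w c \<Delta>}. ?V \<Delta>') /
      (\<Sum>\<^sub>\<infinity>\<Delta>'\<in>Dset d F G0 c w. ?V \<Delta>')"
    using sel by (simp add: ennreal_zero_less_divide ennreal_zero_less_mult_iff)
  then have "0 < move_prob d F G0 c (shift d w c \<Delta>)"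
    unfolding move_prob_def using ennreal_le_infsum[of w UNIV] by (meson UNIV_I order_less_le_trans)
  then show ?thesis by (simp add: wgs_trans_def add_pos_nonneg)
qed

context graph_pair
begin

context
  fixes w :: "'v list"
  assumes walk: "alt_walk w" and even_length: "even (length w)" and closable: "closable d F w"
begin

lemma closed_walk_length: "2 \<le> length w" "4 \<le> length w"
  using walk closable_length[OF closable] even_length by (auto simp: alt_walk_def)

lemma n_w_closed_walk:
  "n_w d w u v = int (edge_count d (plus_pairs w) u v) - int (edge_count d (open_minus_pairs w) u v)
                 - (if is_edge d u v (last w, w ! 0) then 1 else 0)"
  by (simp add: n_w_edge_count minus_pairs_eq_open_minus_pairs[OF even_length closed_walk_length(1)]
      edge_count_append edge_count_def)

lemma plus_edge_count_le_G: "int (edge_count d (plus_pairs w) u v) \<le> int (G u v)"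
proof -
  have "int (edge_count d (plus_pairs w) u v) \<le> max 0 (- D u v)"
    using walk by (simp add: alt_walk_def)
  then show ?thesis by (simp add: D_def)
qed

lemma shift_closed_walk_nonneg: "\<forall>u v. 0 \<le> int (G u v) + n_w d w u v * - 1"
proof (intro allI)
  fix u v
  show "0 \<le> int (G u v) + n_w d w u v * - 1"
    using plus_edge_count_le_G[of u v] by (simp add: n_w_edge_count)
qed

lemma int_shift_closed_walk: "int (shift d w G (- 1) u v) = int (G u v) - n_w d w u v"
  using int_shift[of G u v d w "- 1"] shift_closed_walk_nonneg by simp

lemma shift_closed_walk_in_graph_space: "shift d w G (- 1) \<in> graph_space d F G0"
proof (rule shift_in_graph_space[OF G_space even_length closed_walk_length(1) shift_closed_walk_nonneg])
  fix u v assume F: "in_F d F u v"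
  have "int (edge_count d (plus_pairs w) u v) \<le> max 0 (- D u v)"
    "int (edge_count d (open_minus_pairs w) u v) \<le> max 0 (D u v)"
    using walk by (simp_all add: alt_walk_def)
  then have "edge_count d (plus_pairs w) u v = 0" "edge_count d (open_minus_pairs w) u v = 0"
    using D_in_F[OF F] by simp_all
  moreover have "\<not> in_F d F (last w) (w ! 0)" using closable by (simp add: closable_def Mset_def)
  then have "\<not> is_edge d u v (last w, w ! 0)" using F by (auto simp: is_edge_def in_F_def)
  ultimately show "n_w d w u v = 0" by (simp add: n_w_closed_walk)
qed

lemma minus_pairs_shift_closed_walk_pos: "\<forall>q\<in>set (minus_pairs w). 0 < shift d w G (- 1) (fst q) (snd q)"
proof
  fix q assume "q \<in> set (minus_pairs w)"
  then have "0 < edge_count d (minus_pairs w) (fst q) (snd q)" by (rule edge_count_pos)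
  then have "0 < int (shift d w G (- 1) (fst q) (snd q))"
    using plus_edge_count_le_G[of "fst q" "snd q"] by (simp add: int_shift_closed_walk n_w_edge_count)
  then show "0 < shift d w G (- 1) (fst q) (snd q)" by simp
qed

text \<open>Each of the \<open>length w - 1\<close> non-closing pairs moves one unit of weight towards \<open>G'\<close>; only
  the closing pair may move (at most two entries) away from it.\<close>

lemma weight_dist_shift_closed_walk_less: "weight_dist G' (shift d w G (- 1)) < weight_dist G' G"
proof -
  define N where "N u v = int (edge_count d (plus_pairs w) u v)" for u v
  define P where "P u v = int (edge_count d (open_minus_pairs w) u v)" for u v
  define C where "C u v = (if is_edge d u v (last w, w ! 0) then 1 else 0 :: int)" for u v
  have bounds: "N u v \<le> max 0 (- D u v)" "P u v \<le> max 0 (D u v)" "0 \<le> N u v" "0 \<le> P u v" for u v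
    using walk by (auto simp: alt_walk_def N_def P_def)
  have "\<bar>int (G' u v) - int (shift d w G (- 1) u v)\<bar> \<le> \<bar>D u v\<bar> - N u v - P u v + C u v" for u v
    using bounds[of u v] by (simp add: int_shift_closed_walk n_w_closed_walk D_def N_def P_def C_def
        max_def split: if_splits abs_split)
  then have "weight_dist G' (shift d w G (- 1)) \<le>
      (\<Sum>u\<in>UNIV. \<Sum>v\<in>UNIV. \<bar>D u v\<bar> - N u v - P u v + C u v)"
    unfolding weight_dist_def by (intro sum_mono)
  also have "\<dots> = weight_dist G' G - (\<Sum>u\<in>UNIV. \<Sum>v\<in>UNIV. N u v) - (\<Sum>u\<in>UNIV. \<Sum>v\<in>UNIV. P u v)
      + (\<Sum>u\<in>UNIV. \<Sum>v\<in>UNIV. C u v)"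
    by (simp add: weight_dist_def D_def sum.distrib sum_subtractf)
  also have "\<dots> < weight_dist G' G"
  proof -
    have "int (length (plus_pairs w)) \<le> (\<Sum>u\<in>UNIV. \<Sum>v\<in>UNIV. N u v)"
      "int (length (open_minus_pairs w)) \<le> (\<Sum>u\<in>UNIV. \<Sum>v\<in>UNIV. P u v)"
      using length_le_sum_edge_count[of "plus_pairs w" d] length_le_sum_edge_count[of "open_minus_pairs w" d]
      by (simp_all add: N_def P_def flip: of_nat_sum)
    moreover have "length (plus_pairs w) + length (open_minus_pairs w) = length w - 1"
      using even_length closed_walk_length by (simp add: plus_pairs_def open_minus_pairs_def)
    moreover have "(\<Sum>u\<in>UNIV. \<Sum>v\<in>UNIV. C u v) \<le> 2"
      unfolding C_def by (rule sum_is_edge_le_2)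
    ultimately show ?thesis using closed_walk_length(2) by linarith
  qed
  finally show ?thesis .
qed

lemma wgs_trans_shift_closed_walk_pos: "0 < wgs_trans d F G0 G (shift d w G (- 1))"
proof (rule wgs_trans_pos)
  show "0 < sel_prob d F G w"
    using walk even_length closable by (intro sel_prob_pos) (auto simp: alt_walk_def)
  show "- 1 \<in> Dset d F G0 G w"
    using shift_closed_walk_nonneg shift_closed_walk_in_graph_space by (simp add: Dset_def)
  have "0 < sel_prob d F (shift d w G (- 1)) (wrev w)"
    using walk even_length closable minus_pairs_shift_closed_walk_pos
    by (intro sel_prob_wrev_pos) (auto simp: alt_walk_def)
  then show "0 < Vprob d F (shift d w G (- 1)) w"
    using sel_prob_wrev_le_Vprob by (rule order_less_le_trans)
  have "\<exists>u v. n_w d w u v \<noteq> 0"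
  proof (rule ccontr)
    assume "\<not> ?thesis"
    then have "shift d w G (- 1) = G" by (simp add: shift_def)
    then show False using weight_dist_shift_closed_walk_less by simp
  qed
  then obtain u v where "n_w d w u v \<noteq> 0" by blast
  then show "finite (Dset d F G0 G w)"
    using finite_Dset even_length closed_walk_length(1) by blast
qed

end

lemma step_towards:
  assumes "G \<noteq> G'"
  shows "\<exists>H\<in>graph_space d F G0. 0 < wgs_trans d F G0 G H \<and> weight_dist G' H < weight_dist G' G"
  using closable_alt_walk_exists[OF assms] shift_closed_walk_in_graph_space
    wgs_trans_shift_closed_walk_pos weight_dist_shift_closed_walk_less by blast

end

lemma rtranclp_by_descent:
  fixes \<mu> :: "'a \<Rightarrow> nat"
  assumes "x \<in> S"
    and descent: "\<And>y. y \<in> S \<Longrightarrow> y \<noteq> z \<Longrightarrow> \<exists>y'\<in>S. R y y' \<and> \<mu> y' < \<mu> y"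
  shows "R\<^sup>*\<^sup>* x z"
  using assms(1)
proof (induction "\<mu> x" arbitrary: x rule: less_induct)
  case less
  show ?case
  proof (cases "x = z")
    case False
    then obtain y where "y \<in> S" "R x y" "\<mu> y < \<mu> x" using descent less.prems by blast
    then show ?thesis using less.hyps by (meson converse_rtranclp_into_rtranclp)
  qed simp
qed

theorem proposition4:
  fixes d :: bool and F :: "('v::finite \<times> 'v) set" and G0 :: "'v wgraph"
  assumes "is_graph d G0"
  shows "(\<forall>G\<in>graph_space d F G0. \<forall>G'\<in>graph_space d F G0.
            wgs_trans d F G0 G G' = wgs_trans d F G0 G' G)
       \<and> (\<forall>G\<in>graph_space d F G0. \<forall>G'\<in>graph_space d F G0.
            (\<lambda>H H'. H \<in> graph_space d F G0 \<and> 0 < wgs_trans d F G0 H H')\<^sup>*\<^sup>* G G')"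
proof -
  have "(\<lambda>H H'. H \<in> graph_space d F G0 \<and> 0 < wgs_trans d F G0 H H')\<^sup>*\<^sup>* G G'"
    if "G \<in> graph_space d F G0" "G' \<in> graph_space d F G0" for G G'
  proof (rule rtranclp_by_descent[where \<mu> = "\<lambda>H. nat (weight_dist G' H)", OF that(1)])
    fix H assume "H \<in> graph_space d F G0" "H \<noteq> G'"
    then interpret graph_pair d F G0 H G' using that(2) by unfold_locales
    show "\<exists>H'\<in>graph_space d F G0. (H \<in> graph_space d F G0 \<and> 0 < wgs_trans d F G0 H H') \<and>
        nat (weight_dist G' H') < nat (weight_dist G' H)"
      using step_towards[OF \<open>H \<noteq> G'\<close>] \<open>H \<in> graph_space d F G0\<close> weight_dist_nonneg
      by (smt (verit) nat_less_eq_zless)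
  qed
  then show ?thesis using wgs_trans_commute by blast
qed

end
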